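(* Let $T$ be a semigroup with identity acting by continuous surjections on compact metrizable spaces $X$ and $Y$, giving dynamical systems $(X,\alpha,T)$ and $(Y,\beta,T)$, and suppose $(Y,\beta,T)$ is a factor of $(X,\alpha,T)$. If $E(X,T)$ is completely regular then $E(Y,T)$ is completely regular.
   Context: A factor map is a continuous surjection $\pi:X\to Y$ with $\pi\circ\alpha^t=\beta^t\circ\pi$ for all $t$; $(Y,\beta,T)$ is a factor if such a map exists. $E(X,T)$ is the closure of $\{\alpha^t:t\in T\}$ in $X^X$ (pointwise convergence, composition), similarly $E(Y,T)$. A semigroup is completely regular if each element $a$ admits $x$ with $a=axa$, $ax=xa$. *)

theory Defs
  imports "HOL-Analysis.Analysis"
begin

definition dyn_system :: "'x topology \<Rightarrow> ('t::monoid_mult \<Rightarrow> 'x \<Rightarrow> 'x) \<Rightarrow> bool" where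
  "dyn_system X \<alpha> \<longleftrightarrow>
     compact_space X \<and> metrizable_space X \<and>
     (\<forall>t. continuous_map X X (\<alpha> t) \<and> \<alpha> t ` topspace X = topspace X) \<and>
     (\<forall>x\<in>topspace X. \<alpha> 1 x = x) \<and>
     (\<forall>s t. \<forall>x\<in>topspace X. \<alpha> (s * t) x = \<alpha> s (\<alpha> t x))"

definition factor_map ::
  "'x topology \<Rightarrow> ('t \<Rightarrow> 'x \<Rightarrow> 'x) \<Rightarrow> 'y topology \<Rightarrow> ('t \<Rightarrow> 'y \<Rightarrow> 'y) \<Rightarrow> ('x \<Rightarrow> 'y) \<Rightarrow> bool" where
  "factor_map X \<alpha> Y \<beta> \<pi> \<longleftrightarrow>
     continuous_map X Y \<pi> \<and> \<pi> ` topspace X = topspace Y \<and>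
     (\<forall>t. \<forall>x\<in>topspace X. \<pi> (\<alpha> t x) = \<beta> t (\<pi> x))"

text \<open>Enveloping (Ellis) semigroup: closure of the maps alpha t in X^X with the
  topology of pointwise convergence (product topology); maps are represented as
  functions on topspace X, extensional outside it.\<close>
definition enveloping_semigroup :: "'x topology \<Rightarrow> ('t \<Rightarrow> 'x \<Rightarrow> 'x) \<Rightarrow> ('x \<Rightarrow> 'x) set" where
  "enveloping_semigroup X \<alpha> =
     (product_topology (\<lambda>_. X) (topspace X)) closure_of
       (range (\<lambda>t. restrict (\<alpha> t) (topspace X)))"

definition completely_regular :: "'a set \<Rightarrow> ('a \<Rightarrow> 'a \<Rightarrow> 'a) \<Rightarrow> bool" where
  "completely_regular E mul \<longleftrightarrow>
     (\<forall>a\<in>E. \<exists>x\<in>E. a = mul (mul a x) a \<and> mul a x = mul x a)"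

definition E_completely_regular :: "'x topology \<Rightarrow> ('t \<Rightarrow> 'x \<Rightarrow> 'x) \<Rightarrow> bool" where
  "E_completely_regular X \<alpha> \<longleftrightarrow>
     completely_regular (enveloping_semigroup X \<alpha>) (\<lambda>f g. compose (topspace X) f g)"

end

theory Submission
  imports Defs
begin

text \<open>A factor map \<open>\<pi>\<close> induces a map \<open>\<theta>\<close> from self-maps of \<open>X\<close> to self-maps of \<open>Y\<close>,
  \<open>\<theta> p (\<pi> x) = \<pi> (p x)\<close>. Every element of \<open>E(X,T)\<close> respects the fibres of \<open>\<pi>\<close>
  (a closed condition satisfied by each \<open>\<alpha>\<^sup>t\<close>), so on \<open>E(X,T)\<close> the map \<open>\<theta>\<close> is well defined
  and multiplicative. It is continuous for the pointwise topologies and sends \<open>\<alpha>\<^sup>t\<close> to \<open>\<beta>\<^sup>t\<close>;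
  as \<open>E(X,T)\<close> is compact and \<open>Y\<^sup>Y\<close> Hausdorff, it maps \<open>E(X,T)\<close> onto \<open>E(Y,T)\<close>. Complete
  regularity passes to homomorphic images.\<close>

lemma completely_regular_hom_image:
  assumes cr: "completely_regular E mul" and "E \<subseteq> S"
    and closed: "\<And>a b. a \<in> S \<Longrightarrow> b \<in> S \<Longrightarrow> mul a b \<in> S"
    and hom: "\<And>a b. a \<in> S \<Longrightarrow> b \<in> S \<Longrightarrow> h (mul a b) = mul' (h a) (h b)"
  shows "completely_regular (h ` E) mul'"
  unfolding completely_regular_def
proof
  fix b assume "b \<in> h ` E"
  then obtain a where a: "a \<in> E" and b: "b = h a" by blast
  then obtain x where x: "x \<in> E" and inverse: "a = mul (mul a x) a"
    and commute: "mul a x = mul x a"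
    using cr unfolding completely_regular_def by blast
  have aS: "a \<in> S" and xS: "x \<in> S" using a x \<open>E \<subseteq> S\<close> by auto
  have "h a = mul' (mul' (h a) (h x)) (h a)"
    by (subst inverse) (simp add: hom closed aS xS)
  moreover have "mul' (h a) (h x) = mul' (h x) (h a)"
    by (metis hom aS xS commute)
  ultimately show "\<exists>y\<in>h ` E. b = mul' (mul' b y) b \<and> mul' b y = mul' y b"
    using b x by blast
qed

lemma continuous_image_closure_of_compact:
  assumes f: "continuous_map P Q f" and "compact_space P" "Hausdorff_space Q"
    and "S \<subseteq> topspace P"
  shows "f ` (P closure_of S) = Q closure_of (f ` S)"
proof
  show "f ` (P closure_of S) \<subseteq> Q closure_of (f ` S)"
    using f by (rule continuous_map_image_closure_subset)
  have "closed_map P Q f"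
    using assms by (simp add: continuous_imp_closed_map)
  then show "Q closure_of (f ` S) \<subseteq> f ` (P closure_of S)"
    using \<open>S \<subseteq> topspace P\<close> by (simp add: closed_map_closure_of_image)
qed

definition fibre_preserving :: "'x topology \<Rightarrow> ('x \<Rightarrow> 'y) \<Rightarrow> ('x \<Rightarrow> 'x) \<Rightarrow> bool" where
  "fibre_preserving X \<pi> p \<longleftrightarrow> p \<in> topspace X \<rightarrow> topspace X \<and>
     (\<forall>x\<in>topspace X. \<forall>x'\<in>topspace X. \<pi> x = \<pi> x' \<longrightarrow> \<pi> (p x) = \<pi> (p x'))"

lemma fibre_preservingD:
  assumes "fibre_preserving X \<pi> p" "x \<in> topspace X" "x' \<in> topspace X" "\<pi> x = \<pi> x'"
  shows "\<pi> (p x) = \<pi> (p x')"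
  using assms unfolding fibre_preserving_def by blast

lemma fibre_preserving_compose:
  assumes p: "fibre_preserving X \<pi> p" and q: "fibre_preserving X \<pi> q"
  shows "fibre_preserving X \<pi> (compose (topspace X) p q)"
  unfolding fibre_preserving_def
proof (intro conjI ballI impI)
  have "p \<in> topspace X \<rightarrow> topspace X" "q \<in> topspace X \<rightarrow> topspace X"
    using p q unfolding fibre_preserving_def by blast+
  then show "compose (topspace X) p q \<in> topspace X \<rightarrow> topspace X"
    by (rule funcset_compose[rotated])
  fix x x' assume x: "x \<in> topspace X" "x' \<in> topspace X" "\<pi> x = \<pi> x'"
  then have "\<pi> (p (q x)) = \<pi> (p (q x'))"
    using fibre_preservingD[OF p] fibre_preservingD[OF q] \<open>q \<in> topspace X \<rightarrow> topspace X\<close>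
    by (meson PiE)
  then show "\<pi> (compose (topspace X) p q x) = \<pi> (compose (topspace X) p q x')"
    using x by (simp add: compose_def)
qed

lemma enveloping_semigroup_fibre_preserving:
  assumes "factor_map X \<alpha> Y \<beta> \<pi>" "Hausdorff_space Y"
    and \<alpha>: "\<And>t. \<alpha> t \<in> topspace X \<rightarrow> topspace X"
    and p: "p \<in> enveloping_semigroup X \<alpha>"
  shows "fibre_preserving X \<pi> p"
  unfolding fibre_preserving_def
proof (intro conjI ballI impI)
  let ?P = "product_topology (\<lambda>_. X) (topspace X)"
  have "p \<in> topspace ?P"
    using p unfolding enveloping_semigroup_def by (rule subsetD[OF closure_of_subset_topspace])
  then show "p \<in> topspace X \<rightarrow> topspace X"
    by auto
  fix x x' assume x: "x \<in> topspace X" and x': "x' \<in> topspace X" and fibre: "\<pi> x = \<pi> x'"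
  have \<pi>: "continuous_map X Y \<pi>"
    using assms(1) by (simp add: factor_map_def)
  have eval: "continuous_map ?P Y (\<lambda>q. \<pi> (q z))" if "z \<in> topspace X" for z
    using continuous_map_compose[OF continuous_map_product_projection[of z _ "\<lambda>_. X"] \<pi>] that
    by (simp add: o_def)
  let ?C = "{q \<in> topspace ?P. \<pi> (q x) = \<pi> (q x')}"
  have "closedin ?P ?C"
    using closedin_continuous_maps_eq[OF \<open>Hausdorff_space Y\<close> eval[OF x] eval[OF x']] .
  moreover have "range (\<lambda>t. restrict (\<alpha> t) (topspace X)) \<subseteq> ?C"
    using assms(1) \<alpha> x x' fibre by (auto simp: factor_map_def Pi_iff)
  ultimately have "enveloping_semigroup X \<alpha> \<subseteq> ?C"
    unfolding enveloping_semigroup_def by (simp add: closure_of_minimal)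
  then show "\<pi> (p x) = \<pi> (p x')"
    using p by blast
qed

text \<open>The induced map reads \<open>p\<close> at an arbitrary point of each fibre; for fibre preserving \<open>p\<close>
  the choice does not matter.\<close>
definition induced_map :: "'x topology \<Rightarrow> 'y topology \<Rightarrow> ('x \<Rightarrow> 'y) \<Rightarrow> ('x \<Rightarrow> 'x) \<Rightarrow> 'y \<Rightarrow> 'y"
  where "induced_map X Y \<pi> p = (\<lambda>y\<in>topspace Y. \<pi> (p (inv_into (topspace X) \<pi> y)))"

lemma induced_map_compose:
  assumes onto: "\<pi> ` topspace X = topspace Y"
    and p: "fibre_preserving X \<pi> p" and q: "fibre_preserving X \<pi> q"
  shows "induced_map X Y \<pi> (compose (topspace X) p q)
           = compose (topspace Y) (induced_map X Y \<pi> p) (induced_map X Y \<pi> q)"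
proof
  fix y
  let ?s = "inv_into (topspace X) \<pi>"
  show "induced_map X Y \<pi> (compose (topspace X) p q) y
          = compose (topspace Y) (induced_map X Y \<pi> p) (induced_map X Y \<pi> q) y"
  proof (cases "y \<in> topspace Y")
    case True
    then have sy: "?s y \<in> topspace X"
      using onto inv_into_into by metis
    then have qsy: "q (?s y) \<in> topspace X"
      using q by (auto simp: fibre_preserving_def)
    then have "\<pi> (q (?s y)) \<in> \<pi> ` topspace X"
      by blast
    then have "?s (\<pi> (q (?s y))) \<in> topspace X" "\<pi> (?s (\<pi> (q (?s y)))) = \<pi> (q (?s y))"
      by (simp_all add: inv_into_into f_inv_into_f)
    then have "\<pi> (p (q (?s y))) = \<pi> (p (?s (\<pi> (q (?s y)))))"
      using fibre_preservingD[OF p qsy] by metis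
    moreover have "\<pi> (q (?s y)) \<in> topspace Y"
      using onto qsy by blast
    ultimately show ?thesis
      using True sy by (simp add: induced_map_def compose_def)
  qed (simp add: induced_map_def compose_def)
qed

lemma continuous_map_induced_map:
  assumes "continuous_map X Y \<pi>" "\<pi> ` topspace X = topspace Y"
  shows "continuous_map (product_topology (\<lambda>_. X) (topspace X))
           (product_topology (\<lambda>_. Y) (topspace Y)) (induced_map X Y \<pi>)"
proof (subst continuous_map_componentwise, intro conjI ballI)
  fix y assume "y \<in> topspace Y"
  then have "inv_into (topspace X) \<pi> y \<in> topspace X"
    using assms(2) inv_into_into by metis
  then have "continuous_map (product_topology (\<lambda>_. X) (topspace X)) Y
               (\<lambda>p. \<pi> (p (inv_into (topspace X) \<pi> y)))"
    using continuous_map_compose[OF continuous_map_product_projection[of _ _ "\<lambda>_. X"] assms(1)]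
    by (simp add: o_def)
  then show "continuous_map (product_topology (\<lambda>_. X) (topspace X)) Y (\<lambda>p. induced_map X Y \<pi> p y)"
    using \<open>y \<in> topspace Y\<close> by (simp add: induced_map_def)
qed (auto simp: induced_map_def)

lemma induced_map_action:
  assumes "factor_map X \<alpha> Y \<beta> \<pi>"
  shows "induced_map X Y \<pi> (restrict (\<alpha> t) (topspace X)) = restrict (\<beta> t) (topspace Y)"
proof
  fix y
  show "induced_map X Y \<pi> (restrict (\<alpha> t) (topspace X)) y = restrict (\<beta> t) (topspace Y) y"
  proof (cases "y \<in> topspace Y")
    case True
    then have "y \<in> \<pi> ` topspace X"
      using assms by (simp add: factor_map_def)
    then have "inv_into (topspace X) \<pi> y \<in> topspace X" "\<pi> (inv_into (topspace X) \<pi> y) = y"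
      by (simp_all add: inv_into_into f_inv_into_f)
    then show ?thesis
      using assms True by (simp add: factor_map_def induced_map_def)
  qed (simp add: induced_map_def)
qed

lemma induced_map_enveloping_semigroup:
  assumes factor: "factor_map X \<alpha> Y \<beta> \<pi>"
    and "compact_space X" "Hausdorff_space Y"
    and \<alpha>: "\<And>t. \<alpha> t \<in> topspace X \<rightarrow> topspace X"
  shows "induced_map X Y \<pi> ` enveloping_semigroup X \<alpha> = enveloping_semigroup Y \<beta>"
proof -
  let ?P = "product_topology (\<lambda>_. X) (topspace X)"
  let ?Q = "product_topology (\<lambda>_. Y) (topspace Y)"
  have "continuous_map ?P ?Q (induced_map X Y \<pi>)"
    using factor by (simp add: factor_map_def continuous_map_induced_map)
  moreover have "compact_space ?P" "Hausdorff_space ?Q"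
    using assms(2,3) by (simp_all add: compact_space_product_topology Hausdorff_space_product_topology)
  moreover have "range (\<lambda>t. restrict (\<alpha> t) (topspace X)) \<subseteq> topspace ?P"
    using \<alpha> by (auto simp: Pi_iff)
  ultimately have "induced_map X Y \<pi> ` enveloping_semigroup X \<alpha>
      = ?Q closure_of (induced_map X Y \<pi> ` range (\<lambda>t. restrict (\<alpha> t) (topspace X)))"
    unfolding enveloping_semigroup_def by (rule continuous_image_closure_of_compact)
  also have "induced_map X Y \<pi> ` range (\<lambda>t. restrict (\<alpha> t) (topspace X))
      = range (\<lambda>t. restrict (\<beta> t) (topspace Y))"
    using induced_map_action[OF factor] by (simp add: image_image)
  finally show ?thesis
    unfolding enveloping_semigroup_def .
qed

theorem corollary3p4:
  fixes X :: "'x topology" and Y :: "'y topology"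
    and \<alpha> :: "'t::monoid_mult \<Rightarrow> 'x \<Rightarrow> 'x" and \<beta> :: "'t \<Rightarrow> 'y \<Rightarrow> 'y"
    and \<pi> :: "'x \<Rightarrow> 'y"
  assumes "dyn_system X \<alpha>" and "dyn_system Y \<beta>"
    and "factor_map X \<alpha> Y \<beta> \<pi>"
    and "E_completely_regular X \<alpha>"
  shows "E_completely_regular Y \<beta>"
proof -
  have "compact_space X" and "Hausdorff_space Y"
    and \<alpha>: "\<And>t. \<alpha> t \<in> topspace X \<rightarrow> topspace X"
    using assms(1,2) by (auto simp: dyn_system_def metrizable_imp_Hausdorff_space continuous_map_funspace)
  have onto: "\<pi> ` topspace X = topspace Y"
    using assms(3) by (simp add: factor_map_def)
  have "completely_regular (induced_map X Y \<pi> ` enveloping_semigroup X \<alpha>)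
          (\<lambda>f g. compose (topspace Y) f g)"
  proof (rule completely_regular_hom_image)
    show "completely_regular (enveloping_semigroup X \<alpha>) (\<lambda>f g. compose (topspace X) f g)"
      using assms(4) by (simp add: E_completely_regular_def)
    show "enveloping_semigroup X \<alpha> \<subseteq> Collect (fibre_preserving X \<pi>)"
      using enveloping_semigroup_fibre_preserving[OF assms(3) \<open>Hausdorff_space Y\<close> \<alpha>] by blast
  qed (simp_all add: fibre_preserving_compose induced_map_compose[OF onto])
  then show ?thesis
    unfolding E_completely_regular_def
    using induced_map_enveloping_semigroup[OF assms(3) \<open>compact_space X\<close> \<open>Hausdorff_space Y\<close> \<alpha>]
    by simp
qed

end
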